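(* Let $G=K(n_1,\dots,n_s)$ be a complete $s$-partite graph ($s\ge 2$) with $1\le n_j\le 2$ for all $j\in\{1,\dots,s\}$. Then $\chi_3(G)=\left\lceil \frac{n_1+n_2+\cdots+n_s}{4}\right\rceil$.
   Context: $K(n_1,\dots,n_s)$ denotes the complete $s$-partite graph whose parts have $n_1,\dots,n_s$ vertices. A map $f:V(G)\to\{1,\dots,k\}$ is a $3$-relaxed $k$-coloring if every vertex $u$ has at most $3$ neighbors $v$ with $f(v)=f(u)$; $\chi_3(G)$ is the minimum $k$ for which such a coloring exists. *)

theory Defs
  imports Complex_Main
begin

text \<open>A finite simple graph is given by a vertex set V and a symmetric, irreflexive
adjacency predicate E.\<close>

text \<open>Complete s-partite graph K(n_1,...,n_s): parts indexed by j < s (0-based),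
part j has vertices (j,i) with i < n j; two vertices are adjacent iff they lie in
different parts.\<close>
definition cmp_vertices :: "nat \<Rightarrow> (nat \<Rightarrow> nat) \<Rightarrow> (nat \<times> nat) set" where
  "cmp_vertices s n = {(j, i). j < s \<and> i < n j}"

definition cmp_adj :: "nat \<times> nat \<Rightarrow> nat \<times> nat \<Rightarrow> bool" where
  "cmp_adj u v \<longleftrightarrow> fst u \<noteq> fst v"

definition relaxed_coloring ::
  "nat \<Rightarrow> 'a set \<Rightarrow> ('a \<Rightarrow> 'a \<Rightarrow> bool) \<Rightarrow> nat \<Rightarrow> ('a \<Rightarrow> nat) \<Rightarrow> bool" where
  "relaxed_coloring d V E k f \<longleftrightarrow>
     (\<forall>u\<in>V. f u \<in> {1..k}) \<and>
     (\<forall>u\<in>V. card {v\<in>V. E u v \<and> f v = f u} \<le> d)"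

definition relaxed_chromatic :: "nat \<Rightarrow> 'a set \<Rightarrow> ('a \<Rightarrow> 'a \<Rightarrow> bool) \<Rightarrow> nat" where
  "relaxed_chromatic d V E = (LEAST k. \<exists>f. relaxed_coloring d V E k f)"

end

theory Submission
  imports Defs
begin

(*
  Numbering the vertices and colouring them in consecutive blocks of d + 1 gives a d-relaxed
  colouring of any graph on N vertices with ceil(N / (d + 1)) colours.  Conversely, let C be a
  colour class of a d-relaxed colouring of a complete multipartite graph whose parts have at most
  two vertices.  A vertex u of C is adjacent to all of C outside its own part, so |C| <= d + 2,
  and equality forces the whole part of u into C.  A class of size d + 2 is therefore a union of
  parts of size two and has even size, so for odd d every class has at most d + 1 vertices.
*)

lemma nat_ceiling_of_nat_divide:
  assumes "m > 0"
  shows "nat \<lceil>real N / real m\<rceil> = (N + m - 1) div m"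
proof -
  define q where "q = (N + m - 1) div m"
  have "N \<le> m * q" and "m * q < N + m"
    unfolding q_def
    using mult_div_mod_eq[of m "N + m - 1"] mod_less_divisor[OF assms, of "N + m - 1"] assms
    by linarith+
  then have "real_of_int (int q) - 1 < real N / real m" "real N / real m \<le> real_of_int (int q)"
    using assms by (simp_all add: field_simps flip: of_nat_mult)
  then have "\<lceil>real N / real m\<rceil> = int q"
    by (rule ceiling_unique)
  then show ?thesis
    unfolding q_def by simp
qed

lemma nat_div_eq_iff_atLeastLessThan:
  fixes x b c :: nat
  assumes "0 < b"
  shows "x div b = c \<longleftrightarrow> x \<in> {c * b..<c * b + b}"
proof -
  have "x div b = c \<longleftrightarrow> c \<le> x div b \<and> x div b < Suc c"
    by linarith
  also have "\<dots> \<longleftrightarrow> c * b \<le> x \<and> x < Suc c * b"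
    using assms by (simp add: less_eq_div_iff_mult_less_eq div_less_iff_less_mult)
  finally show ?thesis
    by (simp add: add.commute)
qed

lemma relaxed_chromatic_eqI:
  assumes "relaxed_coloring d V E k f"
    and "\<And>k' f'. relaxed_coloring d V E k' f' \<Longrightarrow> k \<le> k'"
  shows "relaxed_chromatic d V E = k"
  unfolding relaxed_chromatic_def
  by (rule Least_equality) (use assms in auto)

lemma card_le_colors_mult_class_bound:
  assumes "relaxed_coloring d V E k f"
    and "\<And>c. card {v\<in>V. f v = c} \<le> m"
  shows "card V \<le> k * m"
proof -
  have "V = (\<Union>c\<in>{1..k}. {v\<in>V. f v = c})"
    using assms(1) unfolding relaxed_coloring_def by auto
  then have "card V \<le> (\<Sum>c\<in>{1..k}. card {v\<in>V. f v = c})"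
    by (metis card_UN_le finite_atLeastAtMost)
  also have "\<dots> \<le> (\<Sum>c\<in>{1..k}. m)"
    by (rule sum_mono) (rule assms(2))
  finally show ?thesis
    by simp
qed

lemma relaxed_coloring_blocks:
  assumes "finite V" and "\<And>u. \<not> E u u"
  shows "\<exists>f. relaxed_coloring d V E ((card V + d) div Suc d) f"
proof -
  obtain g where g: "bij_betw g V {..<card V}"
    using ex_bij_betw_finite_nat[OF assms(1)] by (metis atLeast0LessThan)
  define f where "f u = g u div Suc d + 1" for u
  have "relaxed_coloring d V E ((card V + d) div Suc d) f"
    unfolding relaxed_coloring_def
  proof (intro conjI ballI)
    fix u assume "u \<in> V"
    then have "g u < card V"
      using g by (auto simp: bij_betw_def)
    then have "(g u + Suc d) div Suc d \<le> (card V + d) div Suc d"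
      by (simp add: div_le_mono)
    then show "f u \<in> {1..(card V + d) div Suc d}"
      unfolding f_def using div_add_self2[where a = "g u" and b = "Suc d"] by simp
    define B where "B = {v\<in>V. f v = f u}"
    define c where "c = g u div Suc d"
    have "g ` B \<subseteq> {c * Suc d..<c * Suc d + Suc d}"
    proof
      fix i assume "i \<in> g ` B"
      then have "i div Suc d = c"
        unfolding B_def f_def c_def by auto
      then show "i \<in> {c * Suc d..<c * Suc d + Suc d}"
        by (simp only: nat_div_eq_iff_atLeastLessThan[OF zero_less_Suc])
    qed
    then have "card (g ` B) \<le> Suc d"
      using card_mono[of "{c * Suc d..<c * Suc d + Suc d}" "g ` B"] by simp
    moreover have "inj_on g B"
      using g unfolding bij_betw_def B_def by (auto intro: inj_on_subset)
    ultimately have "card B \<le> Suc d"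
      by (simp add: card_image)
    have "finite B" "u \<in> B"
      unfolding B_def using assms(1) \<open>u \<in> V\<close> by auto
    have "card {v\<in>V. E u v \<and> f v = f u} \<le> card (B - {u})"
      unfolding B_def using assms \<open>finite B\<close> by (intro card_mono) auto
    also have "\<dots> = card B - 1"
      using \<open>u \<in> B\<close> by simp
    finally show "card {v\<in>V. E u v \<and> f v = f u} \<le> d"
      using \<open>card B \<le> Suc d\<close> by linarith
  qed
  then show ?thesis
    by blast
qed

lemma cmp_vertices_Sigma: "cmp_vertices s n = (SIGMA j:{..<s}. {..<n j})"
  unfolding cmp_vertices_def by auto

lemma finite_cmp_vertices: "finite (cmp_vertices s n)"
  unfolding cmp_vertices_Sigma by auto

lemma card_cmp_vertices: "card (cmp_vertices s n) = (\<Sum>j<s. n j)"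
  unfolding cmp_vertices_Sigma by (simp add: card_SigmaI)

lemma card_color_class_cmp_le:
  assumes "odd d" and parts: "\<And>j. j < s \<Longrightarrow> n j \<le> 2"
    and C: "C \<subseteq> cmp_vertices s n"
    and relaxed: "\<And>u. u \<in> C \<Longrightarrow> card {v\<in>C. cmp_adj u v} \<le> d"
  shows "card C \<le> Suc d"
proof (rule ccontr)
  assume "\<not> card C \<le> Suc d"
  then have big: "Suc (Suc d) \<le> card C"
    by simp
  have "finite C"
    using C finite_cmp_vertices by (rule finite_subset)
  have full_part: "C \<inter> {v. fst v = fst u} = {(fst u, 0), (fst u, 1)}"
    and card_C: "card C = Suc (Suc d)" if "u \<in> C" for u
  proof -
    define P where "P = {v::nat \<times> nat. fst v = fst u}"
    have "C - P = {v\<in>C. cmp_adj u v}"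
      unfolding P_def cmp_adj_def by auto
    then have "card (C - P) \<le> d"
      using relaxed \<open>u \<in> C\<close> by simp
    have sub: "C \<inter> P \<subseteq> {(fst u, 0), (fst u, 1)}"
    proof
      fix v assume "v \<in> C \<inter> P"
      then have "snd v < n (fst u)" "fst u < s"
        using C unfolding P_def cmp_vertices_def by auto
      with parts[of "fst u"] \<open>v \<in> C \<inter> P\<close> show "v \<in> {(fst u, 0), (fst u, 1)}"
        unfolding P_def by (cases v) auto
    qed
    have "card {(fst u, 0::nat), (fst u, 1)} = 2"
      by simp
    moreover have "card C = card (C - P) + card (C \<inter> P)"
      using card_Int_Diff[OF \<open>finite C\<close>, of P] by simp
    moreover have "card (C \<inter> P) \<le> 2"
      using card_mono[OF _ sub] by simp
    ultimately show "C \<inter> P = {(fst u, 0), (fst u, 1)}" and "card C = Suc (Suc d)"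
      using card_seteq[OF _ sub] big \<open>card (C - P) \<le> d\<close> by simp_all
  qed
  have "C = fst ` C \<times> {0, 1}"
  proof
    show "C \<subseteq> fst ` C \<times> {0, 1}"
    proof
      fix v assume "v \<in> C"
      then have "v \<in> {(fst v, 0), (fst v, 1)}"
        using full_part[of v] by blast
      then have "snd v \<in> {0, 1}"
        by (cases v) auto
      moreover have "fst v \<in> fst ` C"
        using \<open>v \<in> C\<close> by (rule imageI)
      ultimately show "v \<in> fst ` C \<times> {0, 1}"
        by (simp add: mem_Times_iff)
    qed
    show "fst ` C \<times> {0, 1} \<subseteq> C"
    proof
      fix v assume "v \<in> fst ` C \<times> {0::nat, 1}"
      then obtain u where "u \<in> C" and "v \<in> {(fst u, 0), (fst u, 1)}"
        by (cases v) auto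
      then show "v \<in> C"
        using full_part[of u] by blast
    qed
  qed
  then have "card C = card (fst ` C \<times> {0::nat, 1})"
    by (rule arg_cong)
  then have "even (card C)"
    by (simp add: card_cartesian_product)
  moreover have "C \<noteq> {}"
    using big by auto
  then obtain u where "u \<in> C"
    by blast
  ultimately show False
    using card_C \<open>odd d\<close> by simp
qed

theorem relaxed_chromatic_cmp_parts_le_2:
  assumes "odd d" and parts: "\<And>j. j < s \<Longrightarrow> n j \<le> 2"
  shows "relaxed_chromatic d (cmp_vertices s n) cmp_adj = ((\<Sum>j<s. n j) + d) div Suc d"
proof -
  define V where "V = cmp_vertices s n"
  obtain f where "relaxed_coloring d V cmp_adj ((card V + d) div Suc d) f"
    using relaxed_coloring_blocks[of V cmp_adj d] finite_cmp_vertices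
    unfolding V_def cmp_adj_def by blast
  moreover have "(card V + d) div Suc d \<le> k" if "relaxed_coloring d V cmp_adj k g" for k g
  proof -
    have "card {v\<in>V. g v = c} \<le> Suc d" for c
    proof (rule card_color_class_cmp_le[OF \<open>odd d\<close> parts])
      show "{v\<in>V. g v = c} \<subseteq> cmp_vertices s n"
        unfolding V_def by blast
      fix u assume u: "u \<in> {v\<in>V. g v = c}"
      then have "card {v\<in>V. cmp_adj u v \<and> g v = g u} \<le> d"
        using that unfolding relaxed_coloring_def by blast
      moreover have "{v\<in>{v\<in>V. g v = c}. cmp_adj u v} = {v\<in>V. cmp_adj u v \<and> g v = g u}"
        using u by auto
      ultimately show "card {v\<in>{v\<in>V. g v = c}. cmp_adj u v} \<le> d"
        by (simp only:)
    qed
    then have "card V \<le> k * Suc d"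
      using card_le_colors_mult_class_bound that by blast
    then have "(card V + d) div Suc d \<le> (k * Suc d + d) div Suc d"
      by (simp add: div_le_mono)
    also have "\<dots> = k"
      by (intro div_nat_eqI) (simp_all add: algebra_simps)
    finally show ?thesis .
  qed
  ultimately show ?thesis
    unfolding V_def card_cmp_vertices by (rule relaxed_chromatic_eqI)
qed

theorem lemma5p6:
  fixes s :: nat and n :: "nat \<Rightarrow> nat"
  assumes "s \<ge> 2"
    and "\<And>j. j < s \<Longrightarrow> 1 \<le> n j \<and> n j \<le> 2"
  shows "relaxed_chromatic 3 (cmp_vertices s n) cmp_adj
           = nat \<lceil>real (\<Sum>j<s. n j) / 4\<rceil>"
proof -
  have "relaxed_chromatic 3 (cmp_vertices s n) cmp_adj = ((\<Sum>j<s. n j) + 3) div 4"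
    using relaxed_chromatic_cmp_parts_le_2[of 3 s n] assms(2) by simp
  also have "\<dots> = nat \<lceil>real (\<Sum>j<s. n j) / 4\<rceil>"
    using nat_ceiling_of_nat_divide[of 4 "\<Sum>j<s. n j"] by simp
  finally show ?thesis .
qed

end
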